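(* Let $\alpha\in(0,1)$, $T>0$ and $f\in C^{2}[0,T]$. For $n\in\mathbb{N}$ put $\tau=T/n$ and $t_k=k\tau$ for $k=0,1,\dots,n$, and set $b_j^{\alpha}=(j+1)^{\alpha}-j^{\alpha}$ for $j=0,1,\dots,n$. Define $R_{k,\alpha}$ for $k=1,\dots,n$ by \[ {}_{0}^{\mathrm{AB}}\mathcal{I}_t^{\alpha}f(t_k)=\frac{1-\alpha}{B(\alpha)}f(t_k)+\frac{\alpha\,\tau^{\alpha}}{B(\alpha)\Gamma(\alpha+1)}\sum_{j=0}^{k-1}b_j^{\alpha}\,\frac{f(t_{k-j})+f(t_{k-j-1})}{2}+R_{k,\alpha}. \] Then there is a constant $K$ (independent of $n$ and $k$) such that $|R_{k,\alpha}|\le K\,t_k^{\alpha}\,\tau$ for all $n\in\mathbb{N}$ and all $k=1,2,\dots,n$.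
   Context: $\Gamma$ is the Gamma function and $B(\alpha)=1-\alpha+\frac{\alpha}{\Gamma(\alpha)}$. The Atangana-Baleanu fractional integral of order $\alpha\in(0,1)$ with base point $0$ of a function $u$ is \[ {}_{0}^{\mathrm{AB}}\mathcal{I}_t^{\alpha}u(t)=\frac{1-\alpha}{B(\alpha)}u(t)+\frac{\alpha}{B(\alpha)\Gamma(\alpha)}\int_0^t u(s)(t-s)^{\alpha-1}\,ds . \] *)

theory Defs
  imports "HOL-Analysis.Analysis"
begin

definition AB_B :: "real \<Rightarrow> real" where
  "AB_B \<alpha> = 1 - \<alpha> + \<alpha> / Gamma \<alpha>"

definition AB_integral :: "real \<Rightarrow> (real \<Rightarrow> real) \<Rightarrow> real \<Rightarrow> real" where
  "AB_integral \<alpha> u t =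
     (1 - \<alpha>) / AB_B \<alpha> * u t
     + \<alpha> / (AB_B \<alpha> * Gamma \<alpha>) * integral {0..t} (\<lambda>s. u s * (t - s) powr (\<alpha> - 1))"

definition C2_on :: "(real \<Rightarrow> real) \<Rightarrow> real set \<Rightarrow> bool" where
  "C2_on f S \<longleftrightarrow> (\<exists>f' f''.
      (\<forall>x\<in>S. (f has_real_derivative f' x) (at x within S)) \<and>
      (\<forall>x\<in>S. (f' has_real_derivative f'' x) (at x within S)) \<and>
      continuous_on S f'')"

definition AB_trap_remainder :: "real \<Rightarrow> real \<Rightarrow> (real \<Rightarrow> real) \<Rightarrow> nat \<Rightarrow> nat \<Rightarrow> real" where
  "AB_trap_remainder \<alpha> T f n k =
     (let \<tau> = T / real n; t = (\<lambda>i::nat. real i * \<tau>);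
          b = (\<lambda>j::nat. (real j + 1) powr \<alpha> - real j powr \<alpha>)
      in AB_integral \<alpha> f (t k)
         - ((1 - \<alpha>) / AB_B \<alpha> * f (t k)
            + \<alpha> * \<tau> powr \<alpha> / (AB_B \<alpha> * Gamma (\<alpha> + 1))
              * (\<Sum>j=0..k-1. b j * (f (t (k - j)) + f (t (k - j - 1))) / 2)))"

end

theory Submission
  imports Defs
begin

text \<open>On the cell between the nodes \<open>t(k-j-1)\<close> and \<open>t(k-j)\<close> the kernel
  \<open>(t(k) - s) powr (\<alpha> - 1)\<close> has exact integral \<open>\<tau> powr \<alpha> * b(j) / \<alpha>\<close>, so the scheme is product
  integration with \<open>f\<close> replaced on each cell by the mean of its endpoint values. A \<open>C\<^sup>2\<close>
  (indeed \<open>C\<^sup>1\<close>) function is \<open>L\<close>-Lipschitz on \<open>[0, T]\<close>, so this replacement costs at most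
  \<open>L \<tau>\<close> times the kernel mass of the cell. The masses telescope to \<open>t(k) powr \<alpha> / \<alpha>\<close>, whence
  \<open>|R(k)| \<le> L t(k) powr \<alpha> \<tau> / (B(\<alpha>) \<Gamma>(\<alpha>))\<close>.\<close>

lemma powr_kernel_has_integral:
  fixes \<alpha> t a b :: real
  assumes "0 < \<alpha>" "a \<le> b" "b \<le> t"
  shows "((\<lambda>s. (t - s) powr (\<alpha> - 1)) has_integral ((t - a) powr \<alpha> - (t - b) powr \<alpha>) / \<alpha>) {a..b}"
proof -
  let ?F = "\<lambda>s. - ((t - s) powr \<alpha>) / \<alpha>"
  have "((\<lambda>s. (t - s) powr (\<alpha> - 1)) has_integral (?F b - ?F a)) {a..b}"
  proof (rule fundamental_theorem_of_calculus_interior)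
    show "continuous_on {a..b} ?F"
      using assms by (intro continuous_intros continuous_on_powr') auto
    fix x assume "x \<in> {a<..<b}"
    then have "(?F has_real_derivative (t - x) powr (\<alpha> - 1)) (at x)"
      using assms by (auto intro!: derivative_eq_intros simp: field_simps)
    then show "(?F has_vector_derivative (t - x) powr (\<alpha> - 1)) (at x)"
      by (simp add: has_real_derivative_iff_has_vector_derivative)
  qed (use assms in auto)
  then show ?thesis by (simp add: diff_divide_distrib)
qed

lemma continuous_times_powr_kernel_integrable:
  fixes \<alpha> a t :: real and f :: "real \<Rightarrow> real"
  assumes "0 < \<alpha>" "a \<le> t" "continuous_on {a..t} f"
  shows "(\<lambda>s. f s * (t - s) powr (\<alpha> - 1)) integrable_on {a..t}"
proof -
  have "((\<lambda>s. (t - s) powr (\<alpha> - 1)) has_integral (t - a) powr \<alpha> / \<alpha>) {a..t}"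
    using powr_kernel_has_integral[OF assms(1,2) order_refl] by simp
  then have "(\<lambda>s. (t - s) powr (\<alpha> - 1)) absolutely_integrable_on {a..t}"
    by (intro nonnegative_absolutely_integrable_1) auto
  moreover have "f \<in> borel_measurable (lebesgue_on {a..t})"
    using assms(3) by (rule continuous_imp_measurable_on_sets_lebesgue) simp
  moreover have "bounded (f ` {a..t})"
    using compact_continuous_image[OF assms(3)] compact_imp_bounded by blast
  ultimately have "(\<lambda>s. f s * (t - s) powr (\<alpha> - 1)) absolutely_integrable_on {a..t}"
    by (intro absolutely_integrable_bounded_measurable_product_real) auto
  then show ?thesis
    by (rule set_lebesgue_integral_eq_integral(1))
qed

lemma powr_kernel_trapezoid_cell_error:
  fixes \<alpha> t a b L :: real and f :: "real \<Rightarrow> real"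
  assumes "0 < \<alpha>" "a \<le> b" "b \<le> t"
    and lip: "L-lipschitz_on {a..b} f"
    and int: "(\<lambda>s. f s * (t - s) powr (\<alpha> - 1)) integrable_on {a..b}"
  shows "\<bar>\<alpha> * integral {a..b} (\<lambda>s. f s * (t - s) powr (\<alpha> - 1))
           - ((t - a) powr \<alpha> - (t - b) powr \<alpha>) * ((f a + f b) / 2)\<bar>
         \<le> L * (b - a) * ((t - a) powr \<alpha> - (t - b) powr \<alpha>)"
proof -
  define c where "c = (f a + f b) / 2"
  define h where "h = (\<lambda>s. (t - s) powr (\<alpha> - 1))"
  define H where "H = ((t - a) powr \<alpha> - (t - b) powr \<alpha>) / \<alpha>"
  have hI: "(h has_integral H) {a..b}"
    unfolding h_def H_def using powr_kernel_has_integral assms(1-3) by blast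
  have dI: "((\<lambda>s. f s * h s - c * h s) has_integral integral {a..b} (\<lambda>s. f s * h s) - c * H) {a..b}"
    using has_integral_diff[OF integrable_integral has_integral_mult_right[OF hI]] int
    unfolding h_def by blast
  have LI: "((\<lambda>s. L * (b - a) * h s) has_integral L * (b - a) * H) {a..b}"
    using has_integral_mult_right[OF hI] .
  have osc: "\<bar>f s - c\<bar> \<le> L * (b - a)" if s: "s \<in> {a..b}" for s
  proof -
    have "\<bar>f s - f x\<bar> \<le> L * (b - a)" if "x \<in> {a..b}" for x
    proof -
      have "\<bar>f s - f x\<bar> \<le> L * \<bar>s - x\<bar>"
        using lipschitz_onD[OF lip s that] by (simp add: dist_real_def)
      also have "\<dots> \<le> L * (b - a)"
        using s that lipschitz_on_nonneg[OF lip] by (intro mult_left_mono) auto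
      finally show ?thesis .
    qed
    from this[of a] this[of b] show ?thesis
      using assms(2) unfolding c_def abs_le_iff by (auto simp: field_simps)
  qed
  have "norm (integral {a..b} (\<lambda>s. f s * h s - c * h s)) \<le> integral {a..b} (\<lambda>s. L * (b - a) * h s)"
  proof (rule integral_norm_bound_integral)
    fix s assume "s \<in> {a..b}"
    then have "\<bar>f s - c\<bar> * h s \<le> L * (b - a) * h s"
      using osc by (intro mult_right_mono) (auto simp: h_def)
    then show "norm (f s * h s - c * h s) \<le> L * (b - a) * h s"
      by (simp add: h_def abs_mult left_diff_distrib[symmetric])
  qed (use has_integral_integrable[OF dI] has_integral_integrable[OF LI] in auto)
  then have "\<bar>integral {a..b} (\<lambda>s. f s * h s) - c * H\<bar> \<le> L * (b - a) * H"
    using integral_unique[OF dI] integral_unique[OF hI] by simp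
  then have "\<alpha> * \<bar>integral {a..b} (\<lambda>s. f s * h s) - c * H\<bar> \<le> \<alpha> * (L * (b - a) * H)"
    using assms(1) by (intro mult_left_mono) auto
  moreover have "\<alpha> * \<bar>integral {a..b} (\<lambda>s. f s * h s) - c * H\<bar>
      = \<bar>\<alpha> * integral {a..b} (\<lambda>s. f s * h s) - ((t - a) powr \<alpha> - (t - b) powr \<alpha>) * c\<bar>"
    using assms(1) unfolding H_def by (simp add: abs_mult field_simps)
  moreover have "\<alpha> * (L * (b - a) * H) = L * (b - a) * ((t - a) powr \<alpha> - (t - b) powr \<alpha>)"
    using assms(1) unfolding H_def by simp
  ultimately show ?thesis
    unfolding c_def h_def by simp
qed

lemma powr_kernel_trapezoid_error:
  fixes \<alpha> \<tau> t L :: real and f :: "real \<Rightarrow> real" and m :: nat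
  assumes "0 < \<alpha>" "0 \<le> \<tau>"
  shows "real m * \<tau> \<le> t \<Longrightarrow> L-lipschitz_on {t - real m * \<tau>..t} f \<Longrightarrow>
    (\<lambda>s. f s * (t - s) powr (\<alpha> - 1)) integrable_on {t - real m * \<tau>..t} \<Longrightarrow>
    \<bar>\<alpha> * integral {t - real m * \<tau>..t} (\<lambda>s. f s * (t - s) powr (\<alpha> - 1))
      - \<tau> powr \<alpha> * (\<Sum>j<m. ((real j + 1) powr \<alpha> - real j powr \<alpha>)
                              * (f (t - real j * \<tau>) + f (t - (real j + 1) * \<tau>)) / 2)\<bar>
    \<le> L * \<tau> * (real m * \<tau>) powr \<alpha>"
proof (induction m)
  case 0
  then show ?case by simp
next
  case (Suc m)
  let ?g = "\<lambda>s. f s * (t - s) powr (\<alpha> - 1)"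
  let ?S = "\<lambda>m. \<Sum>j<m. ((real j + 1) powr \<alpha> - real j powr \<alpha>)
                         * (f (t - real j * \<tau>) + f (t - (real j + 1) * \<tau>)) / 2"
  define a where "a = t - (real m + 1) * \<tau>"
  define b where "b = t - real m * \<tau>"
  have ab: "a \<le> b" "b \<le> t" and cell: "b - a = \<tau>"
    using Suc.prems(1) assms(2) by (auto simp: a_def b_def algebra_simps)
  have lip: "L-lipschitz_on {a..t} f" and int: "?g integrable_on {a..t}"
    using Suc.prems(2,3) by (simp_all add: a_def algebra_simps)
  have "real m * \<tau> \<le> t" "L-lipschitz_on {b..t} f" "?g integrable_on {b..t}"
    using Suc.prems(1) assms(2) ab lipschitz_on_subset[OF lip] integrable_on_subinterval[OF int]
    by (auto simp: b_def algebra_simps)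
  then have IH: "\<bar>\<alpha> * integral {b..t} ?g - \<tau> powr \<alpha> * ?S m\<bar> \<le> L * \<tau> * (real m * \<tau>) powr \<alpha>"
    using Suc.IH unfolding b_def by blast
  define D where "D = (real m + 1) powr \<alpha> - real m powr \<alpha>"
  have mass: "(t - a) powr \<alpha> - (t - b) powr \<alpha> = \<tau> powr \<alpha> * D"
    using assms(2) by (simp add: a_def b_def D_def powr_mult right_diff_distrib mult.commute)
  have "L-lipschitz_on {a..b} f" "?g integrable_on {a..b}"
    using ab lipschitz_on_subset[OF lip] integrable_on_subinterval[OF int] by auto
  from powr_kernel_trapezoid_cell_error[OF assms(1) ab this]
  have cell_error: "\<bar>\<alpha> * integral {a..b} ?g - \<tau> powr \<alpha> * (D * (f b + f a) / 2)\<bar>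
                   \<le> L * \<tau> * (\<tau> powr \<alpha> * D)"
    unfolding mass cell by (simp add: ac_simps)
  have "\<alpha> * integral {a..t} ?g - \<tau> powr \<alpha> * ?S (Suc m)
          = (\<alpha> * integral {b..t} ?g - \<tau> powr \<alpha> * ?S m)
            + (\<alpha> * integral {a..b} ?g - \<tau> powr \<alpha> * (D * (f b + f a) / 2))"
    using Henstock_Kurzweil_Integration.integral_combine[OF ab int, symmetric]
    by (simp add: a_def b_def D_def algebra_simps)
  moreover have "L * \<tau> * (real m * \<tau>) powr \<alpha> + L * \<tau> * (\<tau> powr \<alpha> * D)
                   = L * \<tau> * (real (Suc m) * \<tau>) powr \<alpha>"
    using mass by (simp add: a_def b_def algebra_simps)
  moreover have "t - real (Suc m) * \<tau> = a"
    by (simp add: a_def)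
  ultimately show ?case
    using IH cell_error abs_triangle_ineq[of "\<alpha> * integral {b..t} ?g - \<tau> powr \<alpha> * ?S m"
        "\<alpha> * integral {a..b} ?g - \<tau> powr \<alpha> * (D * (f b + f a) / 2)"]
    by simp
qed

lemma C2_on_imp_lipschitz_on:
  fixes f :: "real \<Rightarrow> real"
  assumes "C2_on f {a..b}"
  obtains L where "L-lipschitz_on {a..b} f"
proof -
  obtain f' f'' where d1: "\<And>x. x \<in> {a..b} \<Longrightarrow> (f has_real_derivative f' x) (at x within {a..b})"
    and d2: "\<And>x. x \<in> {a..b} \<Longrightarrow> (f' has_real_derivative f'' x) (at x within {a..b})"
    using assms unfolding C2_on_def by blast
  have "continuous_on {a..b} f'"
    using d2 DERIV_continuous continuous_on_eq_continuous_within by blast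
  then have "bounded (f' ` {a..b})"
    using compact_continuous_image compact_imp_bounded by blast
  then obtain L where "L > 0" and "\<And>x. x \<in> {a..b} \<Longrightarrow> norm (f' x) \<le> L"
    unfolding bounded_pos by auto
  then have "L-lipschitz_on {a..b} f"
    using field_differentiable_bound[OF convex_real_interval(5) d1]
    by (intro lipschitz_onI) (auto simp: dist_real_def)
  then show ?thesis by (rule that)
qed

lemma AB_B_pos:
  assumes "0 < \<alpha>" "\<alpha> \<le> 1"
  shows "0 < AB_B \<alpha>"
  using assms by (simp add: AB_B_def add_nonneg_pos)

lemma AB_trap_remainder_eq:
  fixes \<alpha> T :: real and f :: "real \<Rightarrow> real" and n k :: nat
  assumes "0 < \<alpha>" "\<alpha> \<le> 1" "1 \<le> k"
  defines "\<tau> \<equiv> T / real n"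
  shows "AB_trap_remainder \<alpha> T f n k =
    (\<alpha> * integral {0..real k * \<tau>} (\<lambda>s. f s * (real k * \<tau> - s) powr (\<alpha> - 1))
     - \<tau> powr \<alpha> * (\<Sum>j<k. ((real j + 1) powr \<alpha> - real j powr \<alpha>)
                  * (f (real k * \<tau> - real j * \<tau>) + f (real k * \<tau> - (real j + 1) * \<tau>)) / 2))
    / (AB_B \<alpha> * Gamma \<alpha>)"
proof -
  have nodes: "(\<Sum>j=0..k-1. ((real j + 1) powr \<alpha> - real j powr \<alpha>)
                  * (f (real (k - j) * \<tau>) + f (real (k - j - 1) * \<tau>)) / 2)
             = (\<Sum>j<k. ((real j + 1) powr \<alpha> - real j powr \<alpha>)
                  * (f (real k * \<tau> - real j * \<tau>) + f (real k * \<tau> - (real j + 1) * \<tau>)) / 2)"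
    using assms(3) \<comment> \<open>for \<open>k = 0\<close> the index set \<open>{0..k-1}\<close> would be \<open>{0}\<close>, not empty\<close>
    by (intro sum.cong) (auto simp: of_nat_diff algebra_simps)
  have "Gamma (\<alpha> + 1) = \<alpha> * Gamma \<alpha>"
    using assms(1) by (intro Gamma_plus1) (auto dest: nonpos_Ints_nonpos)
  moreover have "Gamma \<alpha> \<noteq> 0" "AB_B \<alpha> \<noteq> 0"
    using assms(1,2) AB_B_pos[of \<alpha>] by (auto simp: Gamma_real_pos less_imp_neq[symmetric])
  ultimately show ?thesis
    using assms(1)
    unfolding AB_trap_remainder_def AB_integral_def Let_def \<tau>_def[symmetric] nodes
    by (simp add: field_simps)
qed

lemma AB_trap_remainder_bound:
  fixes \<alpha> T L :: real and f :: "real \<Rightarrow> real" and n k :: nat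
  assumes "0 < \<alpha>" "\<alpha> \<le> 1" "0 \<le> T" "L-lipschitz_on {0..T} f" "1 \<le> k" "k \<le> n"
  defines "\<tau> \<equiv> T / real n"
  shows "\<bar>AB_trap_remainder \<alpha> T f n k\<bar> \<le> L / (AB_B \<alpha> * Gamma \<alpha>) * (real k * \<tau>) powr \<alpha> * \<tau>"
proof -
  have BG: "0 < AB_B \<alpha> * Gamma \<alpha>"
    using assms(1,2) by (simp add: AB_B_pos Gamma_real_pos)
  have "0 < real n"
    using assms(5,6) by simp
  then have "0 \<le> \<tau>" "real k * \<tau> \<le> T"
    using assms(3,6) by (auto simp: \<tau>_def field_simps mult_left_mono)
  then have lip: "L-lipschitz_on {0..real k * \<tau>} f"
    using lipschitz_on_subset[OF assms(4)] by simp
  have "(\<lambda>s. f s * (real k * \<tau> - s) powr (\<alpha> - 1)) integrable_on {0..real k * \<tau>}"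
    using \<open>0 \<le> \<tau>\<close> assms(1) lipschitz_on_continuous_on[OF lip]
    by (intro continuous_times_powr_kernel_integrable) auto
  then have "\<bar>\<alpha> * integral {0..real k * \<tau>} (\<lambda>s. f s * (real k * \<tau> - s) powr (\<alpha> - 1))
      - \<tau> powr \<alpha> * (\<Sum>j<k. ((real j + 1) powr \<alpha> - real j powr \<alpha>)
          * (f (real k * \<tau> - real j * \<tau>) + f (real k * \<tau> - (real j + 1) * \<tau>)) / 2)\<bar>
    \<le> L * \<tau> * (real k * \<tau>) powr \<alpha>"
    using powr_kernel_trapezoid_error[OF assms(1) \<open>0 \<le> \<tau>\<close>, of k "real k * \<tau>" L f] lip
    by simp
  then have "\<bar>AB_trap_remainder \<alpha> T f n k\<bar> \<le> L * \<tau> * (real k * \<tau>) powr \<alpha> / (AB_B \<alpha> * Gamma \<alpha>)"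
    unfolding AB_trap_remainder_eq[OF assms(1,2,5), of T f n, folded \<tau>_def]
    using BG by (simp add: abs_divide divide_right_mono)
  then show ?thesis
    by (simp add: field_simps)
qed

theorem mainTheorem1:
  fixes \<alpha> T :: real and f :: "real \<Rightarrow> real"
  assumes "0 < \<alpha>" "\<alpha> < 1" "0 < T" "C2_on f {0..T}"
  shows "\<exists>K::real. \<forall>n::nat. \<forall>k::nat. 1 \<le> n \<longrightarrow> 1 \<le> k \<longrightarrow> k \<le> n \<longrightarrow>
           \<bar>AB_trap_remainder \<alpha> T f n k\<bar>
             \<le> K * (real k * (T / real n)) powr \<alpha> * (T / real n)"
proof -
  obtain L where "L-lipschitz_on {0..T} f"
    using C2_on_imp_lipschitz_on[OF assms(4)] .
  then show ?thesis
    using AB_trap_remainder_bound[of \<alpha> T L f] assms(1-3)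
    by (intro exI[of _ "L / (AB_B \<alpha> * Gamma \<alpha>)"] allI impI) simp
qed

end
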